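(* Let $h>0$, $P\ge 0$, $0<\zeta\le 1$, $\sigma_A^2\ge 0$, $\sigma_{\rm cov}^2>0$, $P_S>0$, let $N\ge1$ be an integer, and let $\mathcal{A}_N=\{0,1/N,2/N,\dots,1\}$. With $f(\rho)=\log_2\!\left(1+\frac{(1-\rho)hP}{(1-\rho)\sigma_A^2+\sigma_{\rm cov}^2}\right)$ for $\rho\in[0,1]$, define the DPS region with circuit power $$\mathcal{C}^{\rm DPS'}(P)=\bigcup_{\alpha\in\mathcal{A}_N}\ \bigcup_{\boldsymbol\rho\in[0,1]^N}\Big\{(R,Q):\ 0\le Q\le \tfrac1N\Big(\sum_{k=1}^N\rho_k\zeta hP-\sum_{k=\alpha N+1}^{N}P_S\Big),\ \ R\le \tfrac1N\sum_{k=\alpha N+1}^N f(\rho_k)\Big\}$$ and the on-off power splitting (OPS) region with circuit power $$\mathcal{C}^{\rm OPS'}(P)=\bigcup_{\alpha\in\mathcal{A}_N}\ \bigcup_{\rho\in[0,1]}\Big\{(R,Q):\ 0\le Q\le \alpha\zeta hP+(1-\alpha)\rho\zeta hP-(1-\alpha)P_S,\ \ R\le (1-\alpha)f(\rho)\Big\}.$$ Then $\mathcal{C}^{\rm DPS'}(P)=\mathcal{C}^{\rm OPS'}(P)$ for every $P\ge0$.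
   Context: Model of a separated receiver with information-decoding circuit power $P_S$: in a block of $N$ symbols, the information decoder is switched off for the first $\alpha N$ symbols and on (consuming power $P_S$ per symbol) for the remaining $(1-\alpha)N$ symbols; in symbol $k$ a fraction $\rho_k$ of the received power $hP$ is harvested with efficiency $\zeta$ and the fraction $1-\rho_k$ is used for decoding with rate $f(\rho_k)$ when the decoder is on. $\sigma_A^2$ is antenna noise power, $\sigma_{\rm cov}^2$ is conversion noise power. OPS is the special case $\rho_k=1$ for $k\le\alpha N$ and $\rho_k=\rho$ for $k>\alpha N$. *)

theory Defs
  imports Complex_Main
begin

text \<open>Rate function f(rho) = log2(1 + (1-rho) h P / ((1-rho) sigma_A^2 + sigma_cov^2)).
  Here sA stands for sigma_A^2 and scov for sigma_cov^2.\<close>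
definition rate_f :: "real \<Rightarrow> real \<Rightarrow> real \<Rightarrow> real \<Rightarrow> real \<Rightarrow> real" where
  "rate_f h P sA scov \<rho> = log 2 (1 + (1 - \<rho>) * h * P / ((1 - \<rho>) * sA + scov))"

text \<open>alpha ranges over A_N = {j/N | j = 0..N}; we index by j, so alpha*N = j.
  Splitting vectors rho in [0,1]^N are functions on {1..N}.\<close>
definition C_DPS :: "nat \<Rightarrow> real \<Rightarrow> real \<Rightarrow> real \<Rightarrow> real \<Rightarrow> real \<Rightarrow> real \<Rightarrow> (real \<times> real) set" where
  "C_DPS N h P \<zeta> sA scov PS =
     (\<Union>j\<in>{0..N}. \<Union>\<rho>\<in>{\<rho> :: nat \<Rightarrow> real. \<forall>k\<in>{1..N}. 0 \<le> \<rho> k \<and> \<rho> k \<le> 1}.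
        {(R, Q). 0 \<le> Q \<and>
           Q \<le> (1 / real N) * ((\<Sum>k=1..N. \<rho> k * \<zeta> * h * P) - (\<Sum>k=j+1..N. PS)) \<and>
           R \<le> (1 / real N) * (\<Sum>k=j+1..N. rate_f h P sA scov (\<rho> k))})"

definition C_OPS :: "nat \<Rightarrow> real \<Rightarrow> real \<Rightarrow> real \<Rightarrow> real \<Rightarrow> real \<Rightarrow> real \<Rightarrow> (real \<times> real) set" where
  "C_OPS N h P \<zeta> sA scov PS =
     (\<Union>j\<in>{0..N}. \<Union>\<rho>\<in>{0..1::real}.
        (let \<alpha> = real j / real N in
        {(R, Q). 0 \<le> Q \<and>
           Q \<le> \<alpha> * \<zeta> * h * P + (1 - \<alpha>) * \<rho> * \<zeta> * h * P - (1 - \<alpha>) * PS \<and>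
           R \<le> (1 - \<alpha>) * rate_f h P sA scov \<rho>}))"

end

theory Submission
  imports Defs "HOL-Analysis.Analysis"
begin

(* Both regions are unions over the number j = alpha N of symbols with the
   decoder switched off.  For fixed j, the harvested power of a DPS profile
   rho only depends on the sum of the rho k, while its rate is a sum of
   f(rho k) over the j+1..N decoding symbols.  The key fact is that f is
   concave on [0,1]: it is a positive multiple of ln A(rho) - ln B(rho) with
   affine A, B, whose second derivative is nonpositive.  Hence (Jensen)
   replacing rho k by 1 on the first j symbols and by the mean of the tail on
   the remaining ones never decreases the energy nor the rate, and this
   modified profile is exactly an OPS strategy.  Conversely every OPS
   strategy is such a step profile. *)

(* The log-ratio underlying the rate function is concave in the splitting
   ratio: its second derivative is b^2/B^2 - (b+a)^2/A^2 <= 0. *)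
lemma log_ratio_concave:
  fixes a b c :: real
  assumes "a \<ge> 0" "b \<ge> 0" "c > 0"
  shows "concave_on {0..1} (\<lambda>r. ln ((1 - r) * (b + a) + c) - ln ((1 - r) * b + c))"
proof (rule f''_le0_imp_concave[where
      f' = "\<lambda>r. b / ((1 - r) * b + c) - (b + a) / ((1 - r) * (b + a) + c)" and
      f'' = "\<lambda>r. b\<^sup>2 / ((1 - r) * b + c)\<^sup>2 - (b + a)\<^sup>2 / ((1 - r) * (b + a) + c)\<^sup>2"])
  fix r :: real assume "r \<in> {0..1}"
  then have B: "(1 - r) * b + c > 0" and A: "(1 - r) * (b + a) + c > 0"
    using assms by (simp_all add: add_nonneg_pos)
  show "DERIV (\<lambda>r. ln ((1 - r) * (b + a) + c) - ln ((1 - r) * b + c)) r :>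
      b / ((1 - r) * b + c) - (b + a) / ((1 - r) * (b + a) + c)"
    using A B by (auto intro!: derivative_eq_intros simp: field_simps)
  show "DERIV (\<lambda>r. b / ((1 - r) * b + c) - (b + a) / ((1 - r) * (b + a) + c)) r :>
      b\<^sup>2 / ((1 - r) * b + c)\<^sup>2 - (b + a)\<^sup>2 / ((1 - r) * (b + a) + c)\<^sup>2"
    using A B by (auto intro!: derivative_eq_intros simp: field_simps power2_eq_square)
  have "b * ((1 - r) * (b + a) + c) \<le> (b + a) * ((1 - r) * b + c)"
    using assms by (simp add: algebra_simps)
  then have "b / ((1 - r) * b + c) \<le> (b + a) / ((1 - r) * (b + a) + c)"
    using A B by (simp add: divide_simps mult.commute)
  then have "(b / ((1 - r) * b + c))\<^sup>2 \<le> ((b + a) / ((1 - r) * (b + a) + c))\<^sup>2"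
    using B assms by (intro power_mono) auto
  then show "b\<^sup>2 / ((1 - r) * b + c)\<^sup>2 - (b + a)\<^sup>2 / ((1 - r) * (b + a) + c)\<^sup>2 \<le> 0"
    by (simp add: power_divide)
qed simp

lemma concave_on_cong:
  assumes "\<And>x. x \<in> S \<Longrightarrow> f x = g x"
  shows "concave_on S f \<longleftrightarrow> concave_on S g"
proof -
  have "u * f x + v * f y \<le> f (u *\<^sub>R x + v *\<^sub>R y) \<longleftrightarrow> u * g x + v * g y \<le> g (u *\<^sub>R x + v *\<^sub>R y)"
    if "convex S" "x \<in> S" "y \<in> S" "0 \<le> u" "0 \<le> v" "u + v = 1" for x y u v
    using that assms convexD[OF that] by simp
  then show ?thesis
    unfolding concave_on_iff by blast
qed

lemma rate_f_log_ratio: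
  assumes "h * P \<ge> 0" "sA \<ge> 0" "scov > 0" "r \<in> {0..1}"
  shows "rate_f h P sA scov r =
    (ln ((1 - r) * (sA + h * P) + scov) - ln ((1 - r) * sA + scov)) / ln 2"
proof -
  have B: "(1 - r) * sA + scov > 0" and A: "(1 - r) * (sA + h * P) + scov > 0"
    using assms by (simp_all add: add_nonneg_pos)
  have "1 + (1 - r) * h * P / ((1 - r) * sA + scov) =
      ((1 - r) * (sA + h * P) + scov) / ((1 - r) * sA + scov)"
    using B by (simp add: field_simps)
  then show ?thesis
    using A B by (simp add: rate_f_def log_def ln_div)
qed

lemma rate_f_concave:
  assumes "h * P \<ge> 0" "sA \<ge> 0" "scov > 0"
  shows "concave_on {0..1} (rate_f h P sA scov)"
proof -
  have "concave_on {0..1}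
      (\<lambda>r. (ln ((1 - r) * (sA + h * P) + scov) - ln ((1 - r) * sA + scov)) / ln 2)"
    using log_ratio_concave[OF assms] by (intro concave_on_cdiv) auto
  then show ?thesis
    using rate_f_log_ratio[OF assms] by (subst concave_on_cong) auto
qed

(* Jensen's inequality in sum form; it also holds trivially for S = {}. *)
lemma concave_sum_le_card_mean:
  fixes g :: "real \<Rightarrow> real" and y :: "'a \<Rightarrow> real"
  assumes g: "concave_on I g" and S: "finite S" and y: "\<And>k. k \<in> S \<Longrightarrow> y k \<in> I"
  shows "(\<Sum>k\<in>S. g (y k)) \<le> real (card S) * g ((\<Sum>k\<in>S. y k) / real (card S))"
proof (cases "S = {}")
  case False
  define n where "n = real (card S)"
  have n: "n > 0" using S False by (simp add: n_def card_gt_0_iff)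
  have "(\<Sum>k\<in>S. 1 / n * g (y k)) \<le> g (\<Sum>k\<in>S. (1 / n) *\<^sub>R y k)"
    using n y by (intro concave_on_sum[OF S False g]) (auto simp: n_def)
  also have "\<dots> = g ((\<Sum>k\<in>S. y k) / n)"
    by (simp add: sum_distrib_left[symmetric] divide_inverse mult.commute)
  finally show ?thesis
    using n by (simp add: n_def sum_divide_distrib[symmetric] divide_le_eq mult.commute)
qed simp

lemma mean_in_unit_interval:
  fixes y :: "'a \<Rightarrow> real"
  assumes "\<And>k. k \<in> S \<Longrightarrow> 0 \<le> y k \<and> y k \<le> 1"
  shows "(\<Sum>k\<in>S. y k) / real (card S) \<in> {0..1}"
proof -
  have "(\<Sum>k\<in>S. y k) \<le> (\<Sum>k\<in>S. 1)"
    using assms by (intro sum_mono) auto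
  moreover have "0 \<le> (\<Sum>k\<in>S. y k)"
    using assms by (intro sum_nonneg) auto
  ultimately show ?thesis by (auto simp: divide_le_eq_1)
qed

lemma mem_C_DPS_iff:
  assumes "N \<ge> 1"
  shows "(R, Q) \<in> C_DPS N h P \<zeta> sA scov PS \<longleftrightarrow>
    (\<exists>j\<le>N. \<exists>\<rho>. (\<forall>k\<in>{1..N}. 0 \<le> \<rho> k \<and> \<rho> k \<le> 1) \<and> 0 \<le> Q \<and>
      real N * Q \<le> \<zeta> * h * P * (\<Sum>k=1..N. \<rho> k) - real (N - j) * PS \<and>
      real N * R \<le> (\<Sum>k=j+1..N. rate_f h P sA scov (\<rho> k)))"
proof -
  have N: "real N > 0" using assms by simp
  have power_bound: "Q \<le> 1 / real N * ((\<Sum>k=1..N. \<rho> k * \<zeta> * h * P) - (\<Sum>k=j+1..N. PS))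
      \<longleftrightarrow> real N * Q \<le> \<zeta> * h * P * (\<Sum>k=1..N. \<rho> k) - real (N - j) * PS"
    for j and \<rho> :: "nat \<Rightarrow> real"
    using N by (simp add: sum_distrib_left pos_le_divide_eq mult_ac)
  have rate_bound: "R \<le> 1 / real N * X \<longleftrightarrow> real N * R \<le> X" for X
    using N by (simp add: pos_le_divide_eq mult.commute)
  have "(R, Q) \<in> C_DPS N h P \<zeta> sA scov PS \<longleftrightarrow>
    (\<exists>j\<in>{0..N}. \<exists>\<rho>\<in>{\<rho>. \<forall>k\<in>{1..N}. 0 \<le> \<rho> k \<and> \<rho> k \<le> 1}. 0 \<le> Q \<and>
      Q \<le> 1 / real N * ((\<Sum>k=1..N. \<rho> k * \<zeta> * h * P) - (\<Sum>k=j+1..N. PS)) \<and>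
      R \<le> 1 / real N * (\<Sum>k=j+1..N. rate_f h P sA scov (\<rho> k)))"
    unfolding C_DPS_def by blast
  then show ?thesis
    unfolding power_bound rate_bound Bex_def atLeastAtMost_iff mem_Collect_eq by (metis le0)
qed

lemma mem_C_OPS_iff:
  assumes "N \<ge> 1"
  shows "(R, Q) \<in> C_OPS N h P \<zeta> sA scov PS \<longleftrightarrow>
    (\<exists>j\<le>N. \<exists>r\<in>{0..1}. 0 \<le> Q \<and>
      real N * Q \<le> \<zeta> * h * P * (real j + real (N - j) * r) - real (N - j) * PS \<and>
      real N * R \<le> real (N - j) * rate_f h P sA scov r)"
proof -
  have N: "real N > 0" using assms by simp
  have power_bound: "Q \<le> real j / real N * \<zeta> * h * P + (1 - real j / real N) * r * \<zeta> * h * P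
        - (1 - real j / real N) * PS
      \<longleftrightarrow> real N * Q \<le> \<zeta> * h * P * (real j + real (N - j) * r) - real (N - j) * PS"
    if "j \<le> N" for j r
  proof -
    have "real N * (real j / real N * \<zeta> * h * P + (1 - real j / real N) * r * \<zeta> * h * P
        - (1 - real j / real N) * PS) = \<zeta> * h * P * (real j + real (N - j) * r) - real (N - j) * PS"
      using N that by (simp add: of_nat_diff field_simps)
    then show ?thesis
      using N by (metis mult_le_cancel_left_pos)
  qed
  have rate_bound: "R \<le> (1 - real j / real N) * X \<longleftrightarrow> real N * R \<le> real (N - j) * X"
    if "j \<le> N" for j X
  proof -
    have "real N * ((1 - real j / real N) * X) = real (N - j) * X"
      using N that by (simp add: of_nat_diff field_simps)
    then show ?thesis
      using N by (metis mult_le_cancel_left_pos)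
  qed
  have "(R, Q) \<in> C_OPS N h P \<zeta> sA scov PS \<longleftrightarrow>
    (\<exists>j\<in>{0..N}. \<exists>r\<in>{0..1}. 0 \<le> Q \<and>
      Q \<le> real j / real N * \<zeta> * h * P + (1 - real j / real N) * r * \<zeta> * h * P
        - (1 - real j / real N) * PS \<and>
      R \<le> (1 - real j / real N) * rate_f h P sA scov r)"
    unfolding C_OPS_def Let_def by blast
  then show ?thesis
    using power_bound rate_bound by (auto simp del: of_nat_diff)
qed

lemma sum_split_at:
  fixes f :: "nat \<Rightarrow> real"
  assumes "j \<le> N"
  shows "(\<Sum>k=1..N. f k) = (\<Sum>k=1..j. f k) + (\<Sum>k=j+1..N. f k)"
  using sum.ub_add_nat[of 1 j f "N - j"] assms by simp

lemma step_profile_sums: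
  fixes F :: "real \<Rightarrow> real"
  assumes "j \<le> N"
  shows "(\<Sum>k=1..N. if k \<le> j then 1 else r) = real j + real (N - j) * r"
    and "(\<Sum>k=j+1..N. F (if k \<le> j then 1 else r)) = real (N - j) * F r"
  using sum_split_at[OF assms, of "\<lambda>k. if k \<le> j then 1 else r"] by simp_all

lemma averaged_tail_dominates:
  fixes \<rho> :: "nat \<Rightarrow> real"
  assumes "h * P \<ge> 0" "sA \<ge> 0" "scov > 0" "j \<le> N"
    and \<rho>: "\<forall>k\<in>{1..N}. 0 \<le> \<rho> k \<and> \<rho> k \<le> 1"
  defines "r \<equiv> (\<Sum>k=j+1..N. \<rho> k) / real (N - j)"
  shows "r \<in> {0..1}"
    and "(\<Sum>k=1..N. \<rho> k) \<le> real j + real (N - j) * r"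
    and "(\<Sum>k=j+1..N. rate_f h P sA scov (\<rho> k)) \<le> real (N - j) * rate_f h P sA scov r"
proof -
  have tail: "k \<in> {j+1..N} \<Longrightarrow> \<rho> k \<in> {0..1}" for k
    using \<rho> by auto
  have card: "card {j+1..N} = N - j" by simp
  show "r \<in> {0..1}"
    using mean_in_unit_interval[of "{j+1..N}" \<rho>] tail by (simp add: r_def card)
  have "(\<Sum>k=1..j. \<rho> k) \<le> (\<Sum>k=1..j. 1)"
    using \<rho> assms(4) by (intro sum_mono) auto
  moreover have "(\<Sum>k=j+1..N. \<rho> k) = real (N - j) * r"
    by (cases "N = j") (simp_all add: r_def)
  ultimately show "(\<Sum>k=1..N. \<rho> k) \<le> real j + real (N - j) * r"
    using sum_split_at[OF assms(4), of \<rho>] by simp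
  show "(\<Sum>k=j+1..N. rate_f h P sA scov (\<rho> k)) \<le> real (N - j) * rate_f h P sA scov r"
    using concave_sum_le_card_mean[OF rate_f_concave[OF assms(1-3)], of "{j+1..N}" \<rho>] tail
    by (simp add: r_def card)
qed

(* Every DPS point is an OPS point: average the splitting ratios of the tail. *)
lemma C_DPS_point_in_C_OPS:
  assumes hP: "h * P \<ge> 0" and c: "\<zeta> * h * P \<ge> 0" and "sA \<ge> 0" "scov > 0" "N \<ge> 1"
    and "(R, Q) \<in> C_DPS N h P \<zeta> sA scov PS"
  shows "(R, Q) \<in> C_OPS N h P \<zeta> sA scov PS"
proof -
  obtain j \<rho> where j: "j \<le> N" and \<rho>: "\<forall>k\<in>{1..N}. 0 \<le> \<rho> k \<and> \<rho> k \<le> 1" and "0 \<le> Q"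
    and Q: "real N * Q \<le> \<zeta> * h * P * (\<Sum>k=1..N. \<rho> k) - real (N - j) * PS"
    and R: "real N * R \<le> (\<Sum>k=j+1..N. rate_f h P sA scov (\<rho> k))"
    using assms(6) mem_C_DPS_iff[OF assms(5)] by blast
  define r where "r = (\<Sum>k=j+1..N. \<rho> k) / real (N - j)"
  note averaged = averaged_tail_dominates[OF hP assms(3,4) j \<rho>, folded r_def]
  have "\<zeta> * h * P * (\<Sum>k=1..N. \<rho> k) \<le> \<zeta> * h * P * (real j + real (N - j) * r)"
    using mult_left_mono[OF averaged(2) c] .
  then show ?thesis
    unfolding mem_C_OPS_iff[OF assms(5)]
    using j averaged(1) averaged(3) \<open>0 \<le> Q\<close> Q R
    by (intro exI[of _ j] bexI[of _ r] conjI) (assumption | linarith)+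
qed

lemma C_OPS_point_in_C_DPS:
  assumes "N \<ge> 1" and "(R, Q) \<in> C_OPS N h P \<zeta> sA scov PS"
  shows "(R, Q) \<in> C_DPS N h P \<zeta> sA scov PS"
proof -
  obtain j r where j: "j \<le> N" and r: "r \<in> {0..1}" and "0 \<le> Q"
    and Q: "real N * Q \<le> \<zeta> * h * P * (real j + real (N - j) * r) - real (N - j) * PS"
    and R: "real N * R \<le> real (N - j) * rate_f h P sA scov r"
    using assms(2) mem_C_OPS_iff[OF assms(1)] by blast
  show ?thesis
    unfolding mem_C_DPS_iff[OF assms(1)]
  proof (intro exI[of _ j] exI[of _ "\<lambda>k. if k \<le> j then 1 else r"] conjI)
    show "\<forall>k\<in>{1..N}. 0 \<le> (if k \<le> j then 1 else r) \<and> (if k \<le> j then 1 else r) \<le> (1::real)"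
      using r by simp
  qed (use j \<open>0 \<le> Q\<close> Q R in \<open>simp_all only: step_profile_sums[OF j]\<close>)
qed

theorem proposition2:
  fixes h P \<zeta> sA scov PS :: real and N :: nat
  assumes "h > 0" and "P \<ge> 0" and "0 < \<zeta>" and "\<zeta> \<le> 1"
    and "sA \<ge> 0" and "scov > 0" and "PS > 0" and "N \<ge> 1"
  shows "C_DPS N h P \<zeta> sA scov PS = C_OPS N h P \<zeta> sA scov PS"
proof -
  have hP: "h * P \<ge> 0" and c: "\<zeta> * h * P \<ge> 0"
    using assms by simp_all
  have "x \<in> C_DPS N h P \<zeta> sA scov PS \<longleftrightarrow> x \<in> C_OPS N h P \<zeta> sA scov PS" for x
    using C_DPS_point_in_C_OPS[OF hP c assms(5,6,8)] C_OPS_point_in_C_DPS[OF assms(8)]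
    by (cases x) blast
  then show ?thesis by blast
qed

end
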